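(* Let $M>0$, let $t:\mathbb{Z}_{\ge3}\to\mathbb{R}$ be a function such that there is $c>0$ with $t(d)\ge c\log d$ for all $d\ge3$, and let $(\sigma_d)_{d\ge3},(\tau_d)_{d\ge3}$ be real sequences such that $\{t(d)\sigma_d:d\ge3\}$ is bounded and $\lim_{d\to\infty}\tau_d=0$. Then the double series $$\sum_{d\ge3\,:\,t(d)(1-\sigma_d)>1}\ \sum_{m\ge2}F_d(m)\left(\frac{M\,d\,m^{\sigma_d}\log(m)^{\tau_d}}{\varphi(m)\log(m)}\right)^{t(d)}$$ converges.
   Context: $F_d(m)$ denotes the number of even primitive Dirichlet characters of order $d$ and conductor $m$ (note $F_d(1)=0$ for $d\ge3$, so the term $m=1$ is omitted); $\varphi$ is Euler's totient function. *)

theory Defs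
  imports "HOL-Analysis.Analysis" "HOL-Number_Theory.Number_Theory"
begin

definition dirichlet_char :: "nat \<Rightarrow> (nat \<Rightarrow> complex) \<Rightarrow> bool" where
  "dirichlet_char m chi \<longleftrightarrow> m \<ge> 1 \<and> (\<forall>n. chi (n + m) = chi n)
     \<and> (\<forall>n. \<not> coprime n m \<longrightarrow> chi n = 0)
     \<and> (\<forall>a b. chi (a * b) = chi a * chi b) \<and> chi 1 = 1"

text \<open>Primitive: the conductor equals m, i.e. for no proper divisor q of m is
  the character trivial on units congruent to 1 mod q.\<close>
definition primitive_char :: "nat \<Rightarrow> (nat \<Rightarrow> complex) \<Rightarrow> bool" where
  "primitive_char m chi \<longleftrightarrow> (\<forall>q. q dvd m \<and> q < m \<longrightarrow>
     \<not> (\<forall>a. coprime a m \<and> [a = 1] (mod q) \<longrightarrow> chi a = 1))"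

definition char_order_is :: "nat \<Rightarrow> (nat \<Rightarrow> complex) \<Rightarrow> nat \<Rightarrow> bool" where
  "char_order_is m chi d \<longleftrightarrow> d > 0 \<and> (\<forall>n. coprime n m \<longrightarrow> chi n ^ d = 1)
     \<and> (\<forall>k. 0 < k \<and> k < d \<longrightarrow> \<not> (\<forall>n. coprime n m \<longrightarrow> chi n ^ k = 1))"

text \<open>Even: chi(-1) = 1, i.e. chi(m-1) = 1.\<close>
definition even_char :: "nat \<Rightarrow> (nat \<Rightarrow> complex) \<Rightarrow> bool" where
  "even_char m chi \<longleftrightarrow> chi (m - 1) = 1"

definition F :: "nat \<Rightarrow> nat \<Rightarrow> nat" where
  "F d m = card {chi. dirichlet_char m chi \<and> primitive_char m chi \<and> char_order_is m chi d \<and> even_char m chi}"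

end

theory Submission
  imports Defs
begin

text \<open>The characters counted by \<open>F d m\<close> have order dividing \<open>d\<close>, and the units modulo \<open>m\<close>
  are generated by at most two elements per prime factor of \<open>m\<close>, the product of their orders
  being at most \<open>m\<close>. Hence \<open>F d m \<le> d ^ (2 * \<omega>(m))\<close> and \<open>F d m \<le> m\<close>, while \<open>F d m > 0\<close>
  forces \<open>d \<le> \<phi>(m)\<close>.

  For fixed \<open>d\<close>, since \<open>m \<le> 2 ^ \<omega>(m) * \<phi>(m)\<close> and \<open>\<omega>(m)\<close>, \<open>ln (ln m)\<close> are \<open>o(ln m)\<close>, the
  summand is \<open>m ^ (- t d * (1 - \<sigma> d) + o(1))\<close>, so every row converges. For large \<open>d\<close> the summand
  is at most \<open>1 / (d\<^sup>2 * m\<^sup>2)\<close> uniformly in \<open>m\<close>: if \<open>ln m \<le> 4 * ln d\<close>, the factor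
  \<open>(ln m) powr (\<tau> d - 1) \<le> (ln d) powr (-1/2)\<close> raised to the power \<open>t d \<ge> c * ln d\<close> wins;
  otherwise \<open>\<phi>(m) \<ge> m powr (1/2 - o(1))\<close> makes the base at most \<open>m powr (-1/8)\<close>.\<close>
lemma dirichlet_char_modulus_pos: "dirichlet_char m chi \<Longrightarrow> m > 0"
  by (simp add: dirichlet_char_def)

lemma dirichlet_char_mult: "dirichlet_char m chi \<Longrightarrow> chi (a * b) = chi a * chi b"
  by (simp add: dirichlet_char_def)

lemma dirichlet_char_one [simp]: "dirichlet_char m chi \<Longrightarrow> chi (Suc 0) = 1"
  by (simp add: dirichlet_char_def)

lemma dirichlet_char_eq_0: "dirichlet_char m chi \<Longrightarrow> \<not> coprime n m \<Longrightarrow> chi n = 0"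
  by (simp add: dirichlet_char_def)

lemma dirichlet_char_power: "dirichlet_char m chi \<Longrightarrow> chi (a ^ k) = chi a ^ k"
  by (induction k) (simp_all add: dirichlet_char_mult)

lemma dirichlet_char_prod:
  "dirichlet_char m chi \<Longrightarrow> chi (\<Prod>i\<in>I. f i) = (\<Prod>i\<in>I. chi (f i))"
  by (induction I rule: infinite_finite_induct) (simp_all add: dirichlet_char_mult)

lemma dirichlet_char_mod:
  assumes "dirichlet_char m chi"
  shows "chi n = chi (n mod m)"
proof -
  have "chi (r + q * m) = chi r" for q r
  proof (induction q)
    case (Suc q)
    have "chi (r + Suc q * m) = chi ((r + q * m) + m)" by (simp add: algebra_simps)
    with Suc assms show ?case by (simp add: dirichlet_char_def)
  qed simp
  from this[of "n mod m" "n div m"] show ?thesis by simp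
qed

lemma dirichlet_char_cong:
  "dirichlet_char m chi \<Longrightarrow> [a = b] (mod m) \<Longrightarrow> chi a = chi b"
  by (metis cong_def dirichlet_char_mod)

lemma dirichlet_char_eq_if_eq_on_generators:
  assumes "dirichlet_char m chi1" "dirichlet_char m chi2"
    and generated: "\<And>n. coprime n m \<Longrightarrow> \<exists>x. [n = (\<Prod>i\<in>I. b i ^ x i)] (mod m)"
    and on_generators: "\<And>i. i \<in> I \<Longrightarrow> chi1 (b i) = chi2 (b i)"
  shows "chi1 = chi2"
proof
  fix n
  show "chi1 n = chi2 n"
  proof (cases "coprime n m")
    case True
    then obtain x where x: "[n = (\<Prod>i\<in>I. b i ^ x i)] (mod m)" using generated by blast
    have "chi1 n = (\<Prod>i\<in>I. chi1 (b i) ^ x i)"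
      by (simp only: dirichlet_char_cong[OF assms(1) x] dirichlet_char_prod[OF assms(1)]
          dirichlet_char_power[OF assms(1)])
    also have "\<dots> = (\<Prod>i\<in>I. chi2 (b i) ^ x i)" using on_generators by simp
    also have "\<dots> = chi2 n"
      by (simp only: dirichlet_char_cong[OF assms(2) x] dirichlet_char_prod[OF assms(2)]
          dirichlet_char_power[OF assms(2)])
    finally show ?thesis .
  qed (simp add: dirichlet_char_eq_0[OF assms(1)] dirichlet_char_eq_0[OF assms(2)])
qed

definition chars_of_exponent :: "nat \<Rightarrow> nat \<Rightarrow> (nat \<Rightarrow> complex) set" where
  "chars_of_exponent m d = {chi. dirichlet_char m chi \<and> (\<forall>n. coprime n m \<longrightarrow> chi n ^ d = 1)}"

lemma common_roots_unity:
  assumes "d > 0" "e > 0"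
  shows "finite {z::complex. z ^ d = 1 \<and> z ^ e = 1}"
    and "card {z::complex. z ^ d = 1 \<and> z ^ e = 1} \<le> min d e"
proof -
  have roots_finite: "finite {z::complex. z ^ k = 1}" if "k > 0" for k
    using finite_roots_unity[of k] that by simp
  show "finite {z::complex. z ^ d = 1 \<and> z ^ e = 1}"
    using roots_finite[OF \<open>d > 0\<close>] by (rule rev_finite_subset) auto
  have "card {z::complex. z ^ d = 1 \<and> z ^ e = 1} \<le> card {z::complex. z ^ d = 1}"
    using roots_finite[OF \<open>d > 0\<close>] by (rule card_mono) auto
  moreover have "card {z::complex. z ^ d = 1 \<and> z ^ e = 1} \<le> card {z::complex. z ^ e = 1}"
    using roots_finite[OF \<open>e > 0\<close>] by (rule card_mono) auto
  ultimately show "card {z::complex. z ^ d = 1 \<and> z ^ e = 1} \<le> min d e"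
    using card_roots_unity_eq[OF \<open>d > 0\<close>] card_roots_unity_eq[OF \<open>e > 0\<close>] by simp
qed

text \<open>The value of such a character on a generator with \<open>b ^ e = 1\<close> is a common root of
  \<open>z ^ d = 1\<close> and \<open>z ^ e = 1\<close>, and the character is determined by these values.\<close>
lemma card_chars_of_exponent_le_prod:
  fixes b e :: "'i \<Rightarrow> nat"
  assumes "finite I" and "d > 0"
    and e_pos: "\<And>i. i \<in> I \<Longrightarrow> e i > 0"
    and b_order: "\<And>i. i \<in> I \<Longrightarrow> [b i ^ e i = 1] (mod m)"
    and generated: "\<And>n. coprime n m \<Longrightarrow> \<exists>x. [n = (\<Prod>i\<in>I. b i ^ x i)] (mod m)"
  shows "finite (chars_of_exponent m d) \<and> card (chars_of_exponent m d) \<le> (\<Prod>i\<in>I. min d (e i))"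
proof -
  define X where "X = chars_of_exponent m d"
  define R where "R i = {z::complex. z ^ d = 1 \<and> z ^ e i = 1}" for i
  have finite_R: "finite (R i)" and card_R: "card (R i) \<le> min d (e i)" if "i \<in> I" for i
    using common_roots_unity[OF \<open>d > 0\<close> e_pos[OF that]] by (simp_all add: R_def)
  have b_coprime: "coprime (b i) m" if "i \<in> I" for i
    using cong_imp_coprime[OF cong_sym[OF b_order[OF that]]] e_pos[OF that] by simp
  define restr where "restr chi = restrict (\<lambda>i. chi (b i)) I" for chi :: "nat \<Rightarrow> complex"
  have restr_into: "restr ` X \<subseteq> PiE I R"
  proof (rule image_subsetI)
    fix chi assume "chi \<in> X"
    hence chi: "dirichlet_char m chi" "\<And>n. coprime n m \<Longrightarrow> chi n ^ d = 1"
      by (auto simp: X_def chars_of_exponent_def)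
    have "chi (b i) \<in> R i" if "i \<in> I" for i
      using chi(2)[OF b_coprime[OF that]] dirichlet_char_cong[OF chi(1) b_order[OF that]]
      by (simp add: R_def dirichlet_char_power[OF chi(1)] dirichlet_char_one[OF chi(1)])
    thus "restr chi \<in> PiE I R" by (simp add: restr_def restrict_PiE_iff)
  qed
  have "inj_on restr X"
  proof (rule inj_onI)
    fix chi1 chi2 assume "chi1 \<in> X" "chi2 \<in> X" and eq: "restr chi1 = restr chi2"
    have "chi1 (b i) = chi2 (b i)" if "i \<in> I" for i
      using fun_cong[OF eq, of i] that by (simp add: restr_def)
    with \<open>chi1 \<in> X\<close> \<open>chi2 \<in> X\<close> show "chi1 = chi2"
      using generated by (intro dirichlet_char_eq_if_eq_on_generators[where I = I and b = b])
        (auto simp: X_def chars_of_exponent_def)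
  qed
  moreover have "finite (PiE I R)"
    using \<open>finite I\<close> finite_R by (rule finite_PiE)
  ultimately have "finite X" "card X \<le> card (PiE I R)"
    using restr_into by (metis finite_imageD finite_subset, intro card_inj_on_le)
  moreover have "card (PiE I R) \<le> (\<Prod>i\<in>I. min d (e i))"
    unfolding card_PiE[OF \<open>finite I\<close>] using card_R by (intro prod_mono) auto
  ultimately show ?thesis by (simp add: X_def)
qed

text \<open>\<open>5\<close> has order \<open>2 ^ (k - 2)\<close> modulo \<open>2 ^ k\<close>, so its powers exhaust the
  \<open>2 ^ (k - 2)\<close> residues that are \<open>1 mod 4\<close>.\<close>
lemma cong_power_5_mod_2_power:
  fixes n :: nat
  assumes "k \<ge> 2" and "n mod 4 = 1"
  shows "\<exists>i. [n = 5 ^ i] (mod 2 ^ k)"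
proof (cases "k = 2")
  case True
  then show ?thesis using assms by (intro exI[of _ 0]) (simp add: cong_def)
next
  case False
  define N where "N = (2::nat) ^ (k - 2)"
  have "(2::nat) ^ k = 2 ^ 2 * 2 ^ (k - 2)" by (metis \<open>k \<ge> 2\<close> le_add_diff_inverse power_add)
  hence two_power_k: "(2::nat) ^ k = 4 * N" by (simp add: N_def)
  have "N > 0" by (simp add: N_def)
  define U where "U = {x::nat. x < 2 ^ k \<and> x mod 4 = 1}"
  have U_eq: "U = (\<lambda>j. 4 * j + 1) ` {..<N}"
  proof (intro equalityI subsetI)
    fix x assume "x \<in> U"
    hence "x = 4 * (x div 4) + 1" "x div 4 < N" by (auto simp: U_def two_power_k, presburger)
    thus "x \<in> (\<lambda>j. 4 * j + 1) ` {..<N}" by blast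
  qed (auto simp: U_def two_power_k)
  have "card U = N" unfolding U_eq by (subst card_image) (auto simp: inj_on_def)
  have "ord (2 ^ k) (5::nat) = N" using ord_twopow_3_5[of k 5] False \<open>k \<ge> 2\<close> by (simp add: N_def)
  hence inj: "inj_on (\<lambda>i. (5::nat) ^ i mod 2 ^ k) {..<N}" using inj_power_mod[of "2 ^ k" 5] by simp
  have powers_in_U: "(\<lambda>i. (5::nat) ^ i mod 2 ^ k) ` {..<N} \<subseteq> U"
  proof (rule image_subsetI)
    fix i
    have "[(5::nat) ^ i = 1 ^ i] (mod 4)" by (rule cong_pow) (simp add: cong_def)
    thus "5 ^ i mod 2 ^ k \<in> U" unfolding U_def two_power_k using \<open>N > 0\<close> by (simp add: cong_def mod_mod_cancel)
  qed
  have "finite U" unfolding U_eq by simp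
  hence "(\<lambda>i. (5::nat) ^ i mod 2 ^ k) ` {..<N} = U"
    using powers_in_U by (rule card_subset_eq) (simp add: card_image[OF inj] \<open>card U = N\<close>)
  moreover have "n mod 2 ^ k \<in> U"
    unfolding U_def two_power_k using \<open>n mod 4 = 1\<close> \<open>N > 0\<close> by (simp add: mod_mod_cancel)
  ultimately obtain i where "n mod 2 ^ k = 5 ^ i mod 2 ^ k" by blast
  thus ?thesis by (auto simp: cong_def)
qed

lemma cong_2_power_minus_1_squared:
  assumes "k > 0"
  shows "[((2::nat) ^ k - 1) ^ 2 = 1] (mod 2 ^ k)"
proof -
  have "[(2 ^ k - 1) ^ 2 = (1::int)] (mod 2 ^ k)"
    unfolding cong_iff_dvd_diff by (simp add: power2_eq_square algebra_simps)
  hence "[int ((2 ^ k - 1) ^ 2) = int 1] (mod int (2 ^ k))" by (simp add: of_nat_diff)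
  thus ?thesis by (subst (asm) cong_int_iff)
qed

text \<open>The exponents \<open>e j\<close> need not be the exact orders of the generators \<open>g j\<close>.\<close>
definition two_generated_units :: "nat \<Rightarrow> (nat \<Rightarrow> nat) \<Rightarrow> (nat \<Rightarrow> nat) \<Rightarrow> bool" where
  "two_generated_units q g e \<longleftrightarrow>
     (\<forall>j\<in>{0,1}. e j > 0 \<and> [g j ^ e j = 1] (mod q)) \<and> e 0 * e 1 \<le> q \<and>
     (\<forall>n. coprime n q \<longrightarrow> (\<exists>x0 x1. [n = g 0 ^ x0 * g 1 ^ x1] (mod q)))"

lemma two_generated_units_odd_prime_power:
  assumes "prime p" "odd p" "k > 0"
  shows "\<exists>g e. two_generated_units (p ^ k) g e"
proof -
  define q where "q = p ^ k"
  have "q > 1" unfolding q_def using one_less_power[OF prime_gt_1_nat[OF assms(1)] assms(3)] .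
  obtain g where g: "residue_primroot q g"
    using residue_primroot_odd_prime_power_exists[OF assms(1,2)] \<open>k > 0\<close> by (auto simp: q_def)
  have "\<exists>i. [n = g ^ i * 1 ^ 0] (mod q)" if "coprime n q" for n
  proof -
    have "n mod q \<in> totatives q"
      using that \<open>q > 1\<close> by (auto simp: in_totatives_iff coprime_commute intro: Nat.gr0I
          dest: coprime_common_divisor_nat[of n q q])
    then obtain i where "n mod q = g ^ i mod q"
      using residue_primroot_is_generator[OF \<open>q > 1\<close> g] by (auto simp: bij_betw_def)
    thus ?thesis by (auto simp: cong_def)
  qed
  moreover have "[g ^ totient q = 1] (mod q)"
    using g by (intro euler_theorem) (simp add: residue_primroot_def coprime_commute)
  ultimately have "two_generated_units q (\<lambda>j. if j = 0 then g else 1) (\<lambda>j. if j = 0 then totient q else 1)"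
    using \<open>q > 1\<close> totient_le[of q] by (auto simp: two_generated_units_def)
  thus ?thesis by (auto simp: q_def)
qed

lemma units_mod_2_power_generated:
  fixes n :: nat
  assumes "k > 0" "coprime n (2 ^ k)"
  shows "\<exists>x0 x1. [n = 5 ^ x0 * (2 ^ k - 1) ^ x1] (mod 2 ^ k)"
proof (cases "k = 1")
  case True
  with assms(2) show ?thesis by (intro exI[of _ 0]) (auto simp: cong_def odd_iff_mod_2_eq_one)
next
  case False
  with \<open>k > 0\<close> have "k \<ge> 2" by simp
  define h where "h = (2::nat) ^ k - 1"
  have "odd n" using assms by simp
  hence "n mod 4 = 1 \<or> n mod 4 = 3" by presburger
  thus ?thesis
  proof
    assume "n mod 4 = 1"
    then obtain i where "[n = 5 ^ i] (mod 2 ^ k)" using cong_power_5_mod_2_power[OF \<open>k \<ge> 2\<close>] by blast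
    hence "[n = 5 ^ i * h ^ 0] (mod 2 ^ k)" by simp
    thus ?thesis unfolding h_def by blast
  next
    assume "n mod 4 = 3"
    have "(2::nat) ^ k = 2 ^ 2 * 2 ^ (k - 2)" by (metis \<open>k \<ge> 2\<close> le_add_diff_inverse power_add)
    hence "h + 1 = 4 * 2 ^ (k - 2)" by (simp add: h_def)
    hence "h mod 4 = 3" by presburger
    with \<open>n mod 4 = 3\<close> have "(n * h) mod 4 = 1" by (simp add: mod_mult_eq[symmetric])
    then obtain i where i: "[n * h = 5 ^ i] (mod 2 ^ k)"
      using cong_power_5_mod_2_power[OF \<open>k \<ge> 2\<close>] by blast
    have "[n = n * h * h] (mod 2 ^ k)"
      using cong_mult[OF cong_refl[of n] cong_2_power_minus_1_squared[OF \<open>k > 0\<close>]]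
      by (simp add: h_def power2_eq_square mult.assoc cong_sym)
    also have "[n * h * h = 5 ^ i * h ^ 1] (mod 2 ^ k)" using cong_mult[OF i cong_refl] by simp
    finally show ?thesis unfolding h_def by blast
  qed
qed

lemma two_generated_units_2_power:
  assumes "k > 0"
  shows "two_generated_units (2 ^ k) (\<lambda>j. if j = 0 then 5 else 2 ^ k - 1) (\<lambda>j. if j = 0 then 2 ^ (k - 1) else 2)"
proof -
  have "[(5::nat) ^ totient (2 ^ k) = 1] (mod 2 ^ k)" by (intro euler_theorem) simp
  moreover have "totient ((2::nat) ^ k) = 2 ^ (k - 1)"
    using totient_prime_power[OF two_is_prime_nat \<open>k > 0\<close>] by simp
  moreover have "(2::nat) ^ (k - 1) * 2 \<le> 2 ^ k" using \<open>k > 0\<close> by (cases k) auto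
  ultimately show ?thesis
    using cong_2_power_minus_1_squared[OF \<open>k > 0\<close>] units_mod_2_power_generated[OF \<open>k > 0\<close>]
    by (simp add: two_generated_units_def)
qed

lemma two_generated_units_prime_power:
  assumes "prime p" "k > 0"
  shows "\<exists>g e. two_generated_units (p ^ k) g e"
proof (cases "p = 2")
  case True
  with two_generated_units_2_power[OF assms(2)] show ?thesis by blast
next
  case False
  hence "odd p" using assms(1) primes_dvd_imp_eq two_is_prime_nat by blast
  with two_generated_units_odd_prime_power assms show ?thesis by blast
qed

lemma coprime_prime_powers:
  fixes p p' :: nat
  shows "prime p \<Longrightarrow> prime p' \<Longrightarrow> p \<noteq> p' \<Longrightarrow> coprime (p ^ a) (p' ^ b)"
  using primes_coprime[of p p'] by simp

lemma cong_if_cong_prime_power_factors: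
  fixes m x y :: nat
  assumes "m > 0" and "\<And>p. p \<in> prime_factors m \<Longrightarrow> [x = y] (mod p ^ multiplicity p m)"
  shows "[x = y] (mod m)"
proof -
  have "[x = y] (mod (\<Prod>p\<in>prime_factors m. p ^ multiplicity p m))"
    using assms(2) by (intro coprime_cong_prod_nat coprime_prime_powers) auto
  thus ?thesis using prime_factorization_nat[OF \<open>m > 0\<close>] by simp
qed

lemma generated_by_crt_lifts:
  fixes m n :: nat and g :: "nat \<Rightarrow> nat \<Rightarrow> nat" and b :: "nat \<times> nat \<Rightarrow> nat"
  assumes "m > 0"
    and local: "\<And>p. p \<in> prime_factors m \<Longrightarrow>
      \<exists>x0 x1. [n = g p 0 ^ x0 * g p 1 ^ x1] (mod p ^ multiplicity p m)"
    and lift: "\<And>i p. i \<in> prime_factors m \<times> {0, 1} \<Longrightarrow> p \<in> prime_factors m \<Longrightarrow>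
      [b i = (if p = fst i then g (fst i) (snd i) else 1)] (mod p ^ multiplicity p m)"
  shows "\<exists>x. [n = (\<Prod>i\<in>prime_factors m \<times> {0, 1}. b i ^ x i)] (mod m)"
proof -
  define I where "I = prime_factors m \<times> {0::nat, 1}"
  obtain x0 x1 where x: "\<And>p. p \<in> prime_factors m \<Longrightarrow>
      [n = g p 0 ^ x0 p * g p 1 ^ x1 p] (mod p ^ multiplicity p m)"
    using local by metis
  define x where "x i = (if snd i = 0 then x0 (fst i) else x1 (fst i))" for i :: "nat \<times> nat"
  have "[n = (\<Prod>i\<in>I. b i ^ x i)] (mod m)"
  proof (rule cong_if_cong_prime_power_factors[OF \<open>m > 0\<close>])
    fix p assume p: "p \<in> prime_factors m"
    define h where "h i = (if p = fst i then g (fst i) (snd i) else 1) ^ x i" for i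
    have "[(\<Prod>i\<in>I. b i ^ x i) = (\<Prod>i\<in>I. h i)] (mod p ^ multiplicity p m)"
      unfolding h_def I_def using lift p by (intro cong_prod cong_pow)
    also have "(\<Prod>i\<in>I. h i) = (\<Prod>i\<in>{(p, 0), (p, 1)}. h i)"
      using p by (intro prod.mono_neutral_right) (auto simp: I_def h_def)
    also have "\<dots> = g p 0 ^ x0 p * g p 1 ^ x1 p" by (simp add: h_def x_def)
    finally show "[n = (\<Prod>i\<in>I. b i ^ x i)] (mod p ^ multiplicity p m)"
      using x[OF p] by (metis cong_sym cong_trans)
  qed
  thus ?thesis unfolding I_def by blast
qed

text \<open>Generators of the prime-power unit groups are lifted to units modulo \<open>m\<close> by the Chinese
  remainder theorem: \<open>b (p, j)\<close> is the \<open>j\<close>-th generator for \<open>p\<close> modulo the \<open>p\<close>-part of \<open>m\<close>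
  and \<open>1\<close> modulo the rest.\<close>
lemma units_mod_generated:
  fixes m :: nat
  assumes "m > 0"
  shows "\<exists>(I :: (nat \<times> nat) set) b e. finite I \<and> card I = 2 * card (prime_factors m) \<and>
           (\<forall>i\<in>I. e i > 0 \<and> [b i ^ e i = 1] (mod m)) \<and> prod e I \<le> m \<and>
           (\<forall>n. coprime n m \<longrightarrow> (\<exists>x. [n = (\<Prod>i\<in>I. b i ^ x i)] (mod m)))"
proof -
  define P where "P = prime_factors m"
  define q where "q p = p ^ multiplicity p m" for p
  define I where "I = P \<times> {0::nat, 1}"
  have "finite P" by (simp add: P_def)
  have q_coprime: "\<forall>p\<in>P. \<forall>p'\<in>P. p \<noteq> p' \<longrightarrow> coprime (q p) (q p')"
    unfolding q_def P_def by (blast intro: coprime_prime_powers in_prime_factors_imp_prime)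
  have "\<forall>p\<in>P. \<exists>g e. two_generated_units (q p) g e"
    by (auto simp: q_def P_def prime_factors_multiplicity intro: two_generated_units_prime_power)
  then obtain g e where ge: "\<And>p. p \<in> P \<Longrightarrow> two_generated_units (q p) (g p) (e p)"
    by metis
  have "\<forall>i\<in>I. \<exists>x. \<forall>p\<in>P. [x = (if p = fst i then g (fst i) (snd i) else 1)] (mod q p)"
    by (intro ballI chinese_remainder_nat[OF \<open>finite P\<close> q_coprime])
  then obtain b where b: "\<And>i p. i \<in> I \<Longrightarrow> p \<in> P \<Longrightarrow>
      [b i = (if p = fst i then g (fst i) (snd i) else 1)] (mod q p)"
    by metis
  define e' where "e' i = e (fst i) (snd i)" for i
  have e'_pos: "e' i > 0" if "i \<in> I" for i
    using ge[of "fst i"] that by (auto simp: I_def e'_def two_generated_units_def)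
  have b_order: "[b i ^ e' i = 1] (mod m)" if "i \<in> I" for i
  proof (rule cong_if_cong_prime_power_factors[OF \<open>m > 0\<close>], fold q_def P_def)
    fix p assume "p \<in> P"
    have "[b i ^ e' i = (if p = fst i then g (fst i) (snd i) else 1) ^ e' i] (mod q p)"
      using b[OF that \<open>p \<in> P\<close>] by (rule cong_pow)
    also have "[(if p = fst i then g (fst i) (snd i) else 1) ^ e' i = 1] (mod q p)"
      using ge[of "fst i"] that by (auto simp: I_def e'_def two_generated_units_def)
    finally show "[b i ^ e' i = 1] (mod q p)" .
  qed
  have generated: "\<exists>x. [n = (\<Prod>i\<in>I. b i ^ x i)] (mod m)" if "coprime n m" for n
    unfolding I_def P_def
  proof (rule generated_by_crt_lifts[OF \<open>m > 0\<close>, where g = g])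
    fix p assume "p \<in> prime_factors m"
    hence "coprime n (q p)" using \<open>coprime n m\<close> by (auto simp: q_def in_prime_factors_iff)
    thus "\<exists>x0 x1. [n = g p 0 ^ x0 * g p 1 ^ x1] (mod p ^ multiplicity p m)"
      using ge \<open>p \<in> prime_factors m\<close> by (auto simp: two_generated_units_def P_def q_def)
  qed (use b in \<open>simp add: I_def P_def q_def\<close>)
  have "prod e' I = (\<Prod>p\<in>P. \<Prod>j\<in>{0::nat, 1}. e p j)"
    unfolding I_def e'_def prod.cartesian_product by (rule prod.cong) auto
  also have "\<dots> \<le> (\<Prod>p\<in>P. q p)"
    using ge by (intro prod_mono) (auto simp: two_generated_units_def)
  also have "\<dots> = m" using prime_factorization_nat[OF \<open>m > 0\<close>] by (simp add: P_def q_def)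
  finally have "prod e' I \<le> m" .
  moreover have "finite I" "card I = 2 * card (prime_factors m)"
    using \<open>finite P\<close> by (simp_all add: I_def P_def card_cartesian_product)
  ultimately show ?thesis using e'_pos b_order generated by blast
qed

lemma card_chars_of_exponent_le:
  assumes "m > 0" and "d > 0"
  shows "finite (chars_of_exponent m d)"
    and "card (chars_of_exponent m d) \<le> d ^ (2 * card (prime_factors m))"
    and "card (chars_of_exponent m d) \<le> m"
proof -
  obtain I :: "(nat \<times> nat) set" and b e where I: "finite I" "card I = 2 * card (prime_factors m)"
    and e: "\<And>i. i \<in> I \<Longrightarrow> e i > 0" "\<And>i. i \<in> I \<Longrightarrow> [b i ^ e i = 1] (mod m)"
    and "prod e I \<le> m" and generated: "\<And>n. coprime n m \<Longrightarrow> \<exists>x. [n = (\<Prod>i\<in>I. b i ^ x i)] (mod m)"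
    using units_mod_generated[OF \<open>m > 0\<close>] by metis
  have bound: "finite (chars_of_exponent m d) \<and> card (chars_of_exponent m d) \<le> (\<Prod>i\<in>I. min d (e i))"
    using card_chars_of_exponent_le_prod[OF I(1) \<open>d > 0\<close> e generated] .
  have "(\<Prod>i\<in>I. min d (e i)) \<le> (\<Prod>i\<in>I. d)" by (intro prod_mono) auto
  with bound I(2) show "card (chars_of_exponent m d) \<le> d ^ (2 * card (prime_factors m))" by simp
  have "(\<Prod>i\<in>I. min d (e i)) \<le> prod e I" by (intro prod_mono) auto
  with bound \<open>prod e I \<le> m\<close> show "card (chars_of_exponent m d) \<le> m" by simp
  show "finite (chars_of_exponent m d)" using bound by simp
qed

lemma F_le:
  assumes "m > 0" and "d > 0"
  shows "F d m \<le> d ^ (2 * card (prime_factors m))" and "F d m \<le> m"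
proof -
  have "F d m \<le> card (chars_of_exponent m d)"
    unfolding F_def using card_chars_of_exponent_le(1)[OF assms]
    by (rule card_mono) (auto simp: chars_of_exponent_def char_order_is_def)
  thus "F d m \<le> d ^ (2 * card (prime_factors m))" and "F d m \<le> m"
    using card_chars_of_exponent_le(2,3)[OF assms] by linarith+
qed

lemma le_totient_if_F_pos:
  assumes "F d m > 0"
  shows "d \<le> totient m"
proof -
  obtain chi where chi: "dirichlet_char m chi" "char_order_is m chi d"
    using assms unfolding F_def by (metis (no_types, lifting) card.empty empty_Collect_eq less_irrefl)
  have "m > 0" using dirichlet_char_modulus_pos[OF chi(1)] .
  have "chi n ^ totient m = 1" if "coprime n m" for n
    using dirichlet_char_cong[OF chi(1) euler_theorem[OF that]]
    by (simp add: dirichlet_char_power[OF chi(1)] dirichlet_char_one[OF chi(1)])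
  thus ?thesis using chi(2) \<open>m > 0\<close> unfolding char_order_is_def by (meson not_le totient_gt_0_iff)
qed

lemma sum_ln_prime_factors_le_ln:
  fixes m :: nat
  assumes "m > 0"
  shows "(\<Sum>p\<in>prime_factors m. ln (real p)) \<le> ln (real m)"
proof -
  have "(\<Prod>p\<in>prime_factors m. p) \<le> (\<Prod>p\<in>prime_factors m. p ^ multiplicity p m)"
    using prime_ge_1_nat by (intro prod_mono) (auto simp: prime_factors_multiplicity intro!: self_le_power)
  also have "\<dots> = m" using prime_factorization_nat[OF \<open>m > 0\<close>] by simp
  finally have "(\<Prod>p\<in>prime_factors m. real p) \<le> real m"
    unfolding of_nat_prod[symmetric] of_nat_le_iff .
  moreover have "(\<Prod>p\<in>prime_factors m. real p) > 0"
    by (intro prod_pos) (auto simp: in_prime_factors_iff prime_gt_0_nat)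
  ultimately have "ln (\<Prod>p\<in>prime_factors m. real p) \<le> ln (real m)" by simp
  thus ?thesis by (subst (asm) ln_prod) (auto simp: in_prime_factors_iff prime_gt_0_nat)
qed

lemma card_less_real_le:
  fixes A :: "nat set"
  assumes "K \<ge> 0"
  shows "real (card {n\<in>A. real n < K}) \<le> K + 1"
proof -
  have "{n\<in>A. real n < K} \<subseteq> {..<nat \<lceil>K\<rceil>}"
  proof
    fix n assume "n \<in> {n\<in>A. real n < K}"
    hence "real n < real (nat \<lceil>K\<rceil>)" by auto linarith
    thus "n \<in> {..<nat \<lceil>K\<rceil>}" by simp
  qed
  hence "real (card {n\<in>A. real n < K}) \<le> real (nat \<lceil>K\<rceil>)" using card_mono[of "{..<nat \<lceil>K\<rceil>}"] by simp
  also have "\<dots> \<le> K + 1" using \<open>K \<ge> 0\<close> by linarith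
  finally show ?thesis .
qed

text \<open>Primes below \<open>exp (a / \<epsilon>)\<close> are few; each larger prime factor \<open>p\<close> has \<open>a \<le> \<epsilon> * ln p\<close>.\<close>
lemma card_prime_factors_le_ln:
  fixes a \<epsilon> :: real
  assumes "a \<ge> 0" and "\<epsilon> > 0"
  shows "\<exists>C. \<forall>m::nat. m > 0 \<longrightarrow> a * real (card (prime_factors m)) \<le> C + \<epsilon> * ln (real m)"
proof -
  define K where "K = exp (a / \<epsilon>)"
  have "a * real (card (prime_factors m)) \<le> a * (K + 1) + \<epsilon> * ln (real m)" if "m > 0" for m :: nat
  proof -
    define P where "P = prime_factors m"
    define Q where "Q = {p\<in>P. real p < K}"
    have "finite P" by (simp add: P_def)
    have P_ge_1: "real p \<ge> 1" if "p \<in> P" for p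
      using that prime_ge_1_nat by (auto simp: P_def)
    have large_prime: "a \<le> \<epsilon> * ln (real p)" if "p \<in> P" "\<not> real p < K" for p
    proof -
      have "a / \<epsilon> \<le> ln (real p)"
        using that P_ge_1[OF that(1)] ln_le_cancel_iff[of K "real p"] by (simp add: K_def)
      thus ?thesis using \<open>\<epsilon> > 0\<close> by (simp add: field_simps)
    qed
    have "a * real (card P) = (\<Sum>p\<in>P. a)" by simp
    also have "\<dots> \<le> (\<Sum>p\<in>P. (if real p < K then a else 0) + \<epsilon> * ln (real p))"
      using large_prime P_ge_1 \<open>\<epsilon> > 0\<close> by (intro sum_mono) (auto intro: add_increasing2)
    also have "\<dots> = a * real (card Q) + \<epsilon> * (\<Sum>p\<in>P. ln (real p))"
      using \<open>finite P\<close> by (simp add: sum.distrib sum_distrib_left sum.If_cases Q_def Int_def)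
    also have "real (card Q) \<le> K + 1" unfolding Q_def by (rule card_less_real_le) (simp add: K_def)
    hence "a * real (card Q) \<le> a * (K + 1)" using \<open>a \<ge> 0\<close> by (rule mult_left_mono)
    also have "\<epsilon> * (\<Sum>p\<in>P. ln (real p)) \<le> \<epsilon> * ln (real m)"
      using sum_ln_prime_factors_le_ln[OF \<open>m > 0\<close>] \<open>\<epsilon> > 0\<close> by (simp add: P_def)
    finally show ?thesis by (simp add: P_def)
  qed
  thus ?thesis by blast
qed

lemma ln_le_card_prime_factors_plus_ln_totient:
  fixes m :: nat
  assumes "m > 0"
  shows "ln (real m) \<le> real (card (prime_factors m)) * ln 2 + ln (real (totient m))"
proof -
  have "(\<Prod>p\<in>prime_factors m. (1::real) / 2) \<le> (\<Prod>p\<in>prime_factors m. 1 - 1 / real p)"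
  proof (intro prod_mono conjI)
    fix p assume "p \<in> prime_factors m"
    hence "real p \<ge> 2" using prime_ge_2_nat by auto
    thus "1 / 2 \<le> 1 - 1 / real p" by (simp add: field_simps)
  qed simp
  hence "real m * (1 / 2) ^ card (prime_factors m) \<le> real (totient m)"
    using totient_formula2[of m] by (simp add: mult_left_mono)
  hence "real m \<le> 2 ^ card (prime_factors m) * real (totient m)"
    by (simp add: field_simps power_divide)
  hence "ln (real m) \<le> ln (2 ^ card (prime_factors m) * real (totient m))"
    using \<open>m > 0\<close> by simp
  also have "\<dots> = real (card (prime_factors m)) * ln 2 + ln (real (totient m))"
    using \<open>m > 0\<close> by (simp add: ln_mult ln_realpow)
  finally show ?thesis .
qed

lemma ln_ln_le_ln:
  fixes a \<epsilon> :: real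
  assumes "\<epsilon> > 0"
  shows "\<exists>C. \<forall>x \<ge> 2. a * ln (ln x) \<le> C + \<epsilon> * ln x"
proof (cases "a > 0")
  case True
  define s where "s = \<epsilon> / a"
  have "s > 0" using True \<open>\<epsilon> > 0\<close> by (simp add: s_def)
  have "a * ln (ln x) \<le> - a * (1 + ln s) + \<epsilon> * ln x" if "x \<ge> 2" for x :: real
  proof -
    have "ln x > 0" using that by simp
    hence "ln (s * ln x) \<le> s * ln x - 1" using \<open>s > 0\<close> by (intro ln_le_minus_one) simp
    hence "ln (ln x) \<le> s * ln x - 1 - ln s" using \<open>s > 0\<close> \<open>ln x > 0\<close> by (simp add: ln_mult)
    hence "a * ln (ln x) \<le> a * (s * ln x - 1 - ln s)" using True by (simp add: mult_left_mono)
    also have "\<dots> = (a * s) * ln x - a * (1 + ln s)" by (simp add: algebra_simps)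
    also have "a * s = \<epsilon>" using True by (simp add: s_def)
    finally show ?thesis by simp
  qed
  thus ?thesis by blast
next
  case False
  have "a * ln (ln x) \<le> a * ln (ln 2) + \<epsilon> * ln x" if "x \<ge> 2" for x :: real
  proof -
    have "ln (ln 2) \<le> ln (ln x)" using that by simp
    hence "a * ln (ln x) \<le> a * ln (ln 2)" using False by (simp add: mult_left_mono_neg)
    moreover have "0 \<le> \<epsilon> * ln x" using \<open>\<epsilon> > 0\<close> that by simp
    ultimately show ?thesis by linarith
  qed
  thus ?thesis by blast
qed

definition F_summand :: "real \<Rightarrow> real \<Rightarrow> real \<Rightarrow> real \<Rightarrow> nat \<Rightarrow> nat \<Rightarrow> real" where
  "F_summand M t \<sigma> \<tau> d m = real (F d m) *
     ((M * real d * real m powr \<sigma> * ln (real m) powr \<tau>) / (real (totient m) * ln (real m))) powr t"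

lemma F_summand_nonneg: "F_summand M t \<sigma> \<tau> d m \<ge> 0"
  by (simp add: F_summand_def)

lemma F_summand_le_exp:
  assumes "M > 0" "d > 0" "m \<ge> 2" "F d m > 0"
    and "ln (real (F d m)) + t * (ln M + ln (real d) + \<sigma> * ln (real m) + (\<tau> - 1) * ln (ln (real m))
           - ln (real (totient m))) \<le> Z"
  shows "F_summand M t \<sigma> \<tau> d m \<le> exp Z"
proof -
  define b where "b = (M * real d * real m powr \<sigma> * ln (real m) powr \<tau>) / (real (totient m) * ln (real m))"
  have "ln (real m) > 0" "real (totient m) > 0" using \<open>m \<ge> 2\<close> by simp_all
  hence "b > 0" using assms(1,2) by (simp add: b_def)
  have "ln b = ln M + ln (real d) + \<sigma> * ln (real m) + (\<tau> - 1) * ln (ln (real m)) - ln (real (totient m))"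
    using assms(1,2) \<open>ln (real m) > 0\<close> \<open>real (totient m) > 0\<close>
    by (simp add: b_def ln_div ln_mult ln_powr algebra_simps)
  have "F_summand M t \<sigma> \<tau> d m = real (F d m) * b powr t" by (simp add: F_summand_def b_def)
  also have "\<dots> = exp (ln (real (F d m)) + t * ln b)"
    using \<open>b > 0\<close> \<open>F d m > 0\<close> by (simp add: powr_def exp_add mult.commute)
  also have "\<dots> \<le> exp Z" using assms(5) \<open>ln b = _\<close> by simp
  finally show ?thesis .
qed

lemma F_summand_le_powr:
  assumes "M > 0" "d > 0" "t > 0" "t * (1 - \<sigma>) > 1"
  shows "\<exists>K \<delta>. \<delta> > 0 \<and> (\<forall>m\<ge>2. F_summand M t \<sigma> \<tau> d m \<le> K * real m powr - (1 + \<delta>))"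
proof -
  define \<epsilon> where "\<epsilon> = (t * (1 - \<sigma>) - 1) / 3"
  have "\<epsilon> > 0" using assms(4) by (simp add: \<epsilon>_def)
  have "2 * ln (real d) + t * ln 2 \<ge> 0" using assms(2,3) by simp
  then obtain C1 where C1: "\<And>m::nat. m > 0 \<Longrightarrow>
      (2 * ln (real d) + t * ln 2) * real (card (prime_factors m)) \<le> C1 + \<epsilon> * ln (real m)"
    using card_prime_factors_le_ln[OF _ \<open>\<epsilon> > 0\<close>] by blast
  obtain C2 where C2: "\<And>x. x \<ge> 2 \<Longrightarrow> t * (\<tau> - 1) * ln (ln x) \<le> C2 + \<epsilon> * ln x"
    using ln_ln_le_ln[OF \<open>\<epsilon> > 0\<close>] by blast
  define Z where "Z = t * (ln M + ln (real d)) + C1 + C2"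
  have "F_summand M t \<sigma> \<tau> d m \<le> exp Z * real m powr - (1 + \<epsilon>)" if "m \<ge> 2" for m :: nat
  proof (cases "F d m = 0")
    case False
    define \<omega> L P where "\<omega> = real (card (prime_factors m))" and "L = ln (real m)"
      and "P = ln (real (totient m))"
    have "real (F d m) \<le> real d ^ (2 * card (prime_factors m))"
      using F_le(1)[of m d] \<open>m \<ge> 2\<close> \<open>d > 0\<close> by (simp flip: of_nat_power)
    hence "ln (real (F d m)) \<le> ln (real d ^ (2 * card (prime_factors m)))"
      using False \<open>d > 0\<close> by simp
    also have "\<dots> = 2 * \<omega> * ln (real d)" using \<open>d > 0\<close> by (simp add: \<omega>_def ln_realpow)
    finally have "ln (real (F d m)) \<le> 2 * \<omega> * ln (real d)" .
    moreover have "t * L \<le> t * (\<omega> * ln 2 + P)"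
      using ln_le_card_prime_factors_plus_ln_totient[of m] \<open>m \<ge> 2\<close> \<open>t > 0\<close>
      by (simp add: \<omega>_def L_def P_def)
    moreover have "t * (\<sigma> * L) = (t - 1 - 3 * \<epsilon>) * L" by (simp add: \<epsilon>_def field_simps)
    moreover note C1[of m] C2[of "real m"]
    ultimately have "ln (real (F d m)) + t * (ln M + ln (real d) + \<sigma> * L + (\<tau> - 1) * ln L - P)
        \<le> Z + (- (1 + \<epsilon>)) * L"
      using \<open>m \<ge> 2\<close> by (simp add: Z_def \<omega>_def L_def algebra_simps)
    hence "F_summand M t \<sigma> \<tau> d m \<le> exp (Z + (- (1 + \<epsilon>)) * L)"
      using assms(1,2) \<open>m \<ge> 2\<close> False by (intro F_summand_le_exp) (simp_all add: L_def P_def)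
    thus ?thesis using \<open>m \<ge> 2\<close> by (simp add: L_def exp_add powr_def)
  qed (simp add: F_summand_def)
  thus ?thesis using \<open>\<epsilon> > 0\<close> by blast
qed

lemma summable_on_F_summand_row:
  assumes "M > 0" "d > 0" "t > 0" "t * (1 - \<sigma>) > 1"
  shows "(\<lambda>m. F_summand M t \<sigma> \<tau> d m) summable_on {2..}"
proof -
  obtain K \<delta> where "\<delta> > 0" and bound: "\<And>m. m \<ge> 2 \<Longrightarrow> F_summand M t \<sigma> \<tau> d m \<le> K * real m powr - (1 + \<delta>)"
    using F_summand_le_powr[OF assms] by blast
  have "summable (\<lambda>m. real m powr - (1 + \<delta>))"
    using \<open>\<delta> > 0\<close> by (subst summable_real_powr_iff) simp
  hence "(\<lambda>m. real m powr - (1 + \<delta>)) summable_on UNIV"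
    by (subst summable_on_UNIV_nonneg_real_iff) simp_all
  hence "(\<lambda>m. K * real m powr - (1 + \<delta>)) summable_on {2..}"
    by (intro summable_on_cmult_right) (auto intro: summable_on_subset)
  thus ?thesis using bound F_summand_nonneg by (rule summable_on_comparison_test) auto
qed

lemma ln_totient_ge_half_ln: "\<exists>C. \<forall>m::nat. m > 0 \<longrightarrow> ln (real m) / 2 - C \<le> ln (real (totient m))"
proof -
  obtain C where C: "\<And>m::nat. m > 0 \<Longrightarrow> ln 2 * real (card (prime_factors m)) \<le> C + 1 / 2 * ln (real m)"
    using card_prime_factors_le_ln[of "ln 2" "1 / 2"] by auto
  have "ln (real m) / 2 - C \<le> ln (real (totient m))" if "m > 0" for m :: nat
    using C[OF that] ln_le_card_prime_factors_plus_ln_totient[OF that] by (simp add: mult.commute)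
  thus ?thesis by blast
qed

text \<open>Here \<open>u = ln (M * d * (ln m) powr (\<tau> - 1) / \<phi>(m))\<close>, \<open>a = ln M\<close>, \<open>l = ln d\<close>, \<open>L = ln m\<close>, and \<open>C\<close>
  is a constant with \<open>ln \<phi>(m) \<ge> L / 2 - C\<close>.\<close>
lemma large_d_exponent_estimate:
  fixes a c B C t l L u :: real
  assumes "c > 0" "B \<ge> 0" "c * l \<le> t" "1 \<le> l" "l \<le> L"
    and u_le: "u \<le> a - ln l / 2" "u \<le> a + C + l - L / 2"
    and large: "2 * (a + (4 * B + 14) / c) \<le> ln l" "8 * (B + 5) \<le> c * l" "2 * (a + C) \<le> l"
  shows "t * u \<le> - (B + 3) * L - 2 * l"
proof -
  have "t \<ge> 0" using mult_nonneg_nonneg[of c l] assms(1,3,4) by linarith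
  show ?thesis
  proof (cases "L \<le> 4 * l")
    case True
    define K where "K = (4 * B + 14) / c"
    have "K \<ge> 0" using assms(1,2) by (simp add: K_def)
    have "u \<le> - K" using u_le(1) large(1) unfolding K_def[symmetric] by (simp add: field_simps)
    hence "t * u \<le> t * (- K)" using \<open>t \<ge> 0\<close> by (rule mult_left_mono)
    also have "\<dots> \<le> (c * l) * (- K)" using assms(3) \<open>K \<ge> 0\<close> by (simp add: mult_right_mono)
    also have "\<dots> = - (4 * B + 14) * l" using \<open>c > 0\<close> by (simp add: K_def field_simps)
    also have "\<dots> \<le> - (B + 3) * L - 2 * l"
      using mult_left_mono[OF True, of "B + 3"] \<open>B \<ge> 0\<close> by (simp add: algebra_simps)
    finally show ?thesis .
  next
    case False
    have "u \<le> - L / 8" using u_le(2) large(3) False by (simp add: field_simps)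
    hence "t * u \<le> t * (- L / 8)" using \<open>t \<ge> 0\<close> by (rule mult_left_mono)
    also have "\<dots> \<le> (8 * (B + 5)) * (- L / 8)"
      using assms(3,4,5) large(2) by (intro mult_right_mono_neg) auto
    also have "\<dots> \<le> - (B + 3) * L - 2 * l" using \<open>l \<le> L\<close> by (simp add: algebra_simps)
    finally show ?thesis .
  qed
qed

lemma F_summand_le_inverse_squares:
  assumes "M > 0" "c > 0" "B \<ge> 0" "c * ln (real d) \<le> t" "t * \<sigma> \<le> B" "\<tau> \<le> 1 / 2"
    and ln_totient: "\<And>m::nat. m > 0 \<Longrightarrow> ln (real m) / 2 - C \<le> ln (real (totient m))"
    and large: "1 \<le> ln (real d)" "2 * (ln M + (4 * B + 14) / c) \<le> ln (ln (real d))"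
      "8 * (B + 5) \<le> c * ln (real d)" "2 * (ln M + C) \<le> ln (real d)"
    and "m \<ge> 2"
  shows "F_summand M t \<sigma> \<tau> d m \<le> inverse (real d ^ 2) * inverse (real m ^ 2)"
proof (cases "F d m = 0")
  case False
  define l L P where "l = ln (real d)" and "L = ln (real m)" and "P = ln (real (totient m))"
  define u where "u = ln M + l - P + (\<tau> - 1) * ln L"
  have "d > 0" using large(1) by (cases d) auto
  have "d \<le> totient m" using False le_totient_if_F_pos by blast
  hence "l \<le> P" using \<open>d > 0\<close> \<open>m \<ge> 2\<close> by (simp add: l_def P_def)
  moreover have "P \<le> L" using \<open>m \<ge> 2\<close> totient_le[of m] by (simp add: P_def L_def)
  ultimately have "l \<le> L" by linarith
  have "ln (real (F d m)) \<le> L"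
    using F_le(2)[of m d] False \<open>m \<ge> 2\<close> \<open>d > 0\<close> by (simp add: L_def)
  have "ln l \<le> ln L" using large(1) \<open>l \<le> L\<close> by (simp add: l_def)
  moreover have "ln l \<ge> 0" using large(1) by (simp add: l_def)
  ultimately have "(\<tau> - 1) * ln L \<le> - ln l / 2" and "(\<tau> - 1) * ln L \<le> 0"
    using \<open>\<tau> \<le> 1 / 2\<close> mult_right_mono[of "\<tau> - 1" "- 1 / 2" "ln L"] by linarith+
  hence "u \<le> ln M - ln l / 2" and "u \<le> ln M + C + l - L / 2"
    using \<open>l \<le> P\<close> ln_totient[of m] \<open>m \<ge> 2\<close> by (simp_all add: u_def L_def P_def)
  hence "t * u \<le> - (B + 3) * L - 2 * l"
    using assms(2-4) large \<open>l \<le> L\<close> by (intro large_d_exponent_estimate) (simp_all add: l_def)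
  moreover have "t * (\<sigma> * L) \<le> B * L"
    using \<open>t * \<sigma> \<le> B\<close> \<open>m \<ge> 2\<close> by (simp add: L_def mult_right_mono flip: mult.assoc)
  ultimately have "ln (real (F d m)) + t * (ln M + l + \<sigma> * L + (\<tau> - 1) * ln L - P) \<le> - 2 * l - 2 * L"
    using \<open>ln (real (F d m)) \<le> L\<close> by (simp add: u_def algebra_simps)
  hence "F_summand M t \<sigma> \<tau> d m \<le> exp (- 2 * l - 2 * L)"
    using assms(1) \<open>d > 0\<close> \<open>m \<ge> 2\<close> False by (intro F_summand_le_exp) (simp_all add: l_def L_def P_def)
  also have "- 2 * l - 2 * L = - ln (real d ^ 2 * real m ^ 2)"
    using \<open>d > 0\<close> \<open>m \<ge> 2\<close> by (simp add: l_def L_def ln_mult ln_realpow)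
  also have "exp \<dots> = inverse (real d ^ 2) * inverse (real m ^ 2)"
    using \<open>d > 0\<close> \<open>m \<ge> 2\<close> by (simp add: exp_minus inverse_mult_distrib)
  finally show ?thesis .
qed (simp add: F_summand_def)

lemma eventually_F_summand_le_inverse_squares:
  fixes t \<sigma> \<tau> :: "nat \<Rightarrow> real"
  assumes "M > 0" "c > 0" "\<And>d. d \<ge> 3 \<Longrightarrow> c * ln (real d) \<le> t d" "\<And>d. d \<ge> 3 \<Longrightarrow> t d * \<sigma> d \<le> B"
    and "\<tau> \<longlonglongrightarrow> 0"
  shows "\<forall>\<^sub>F d in sequentially. \<forall>m\<ge>2.
           F_summand M (t d) (\<sigma> d) (\<tau> d) d m \<le> inverse (real d ^ 2) * inverse (real m ^ 2)"
proof -
  define B' where "B' = max B 0"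
  obtain C where ln_totient: "\<And>m::nat. m > 0 \<Longrightarrow> ln (real m) / 2 - C \<le> ln (real (totient m))"
    using ln_totient_ge_half_ln by blast
  have ln_d: "filterlim (\<lambda>d. ln (real d)) at_top sequentially"
    by (rule filterlim_compose[OF ln_at_top filterlim_real_sequentially])
  have ln_ln_d: "filterlim (\<lambda>d. ln (ln (real d))) at_top sequentially"
    by (rule filterlim_compose[OF ln_at_top ln_d])
  have "\<forall>\<^sub>F d in sequentially. d \<ge> 3 \<and> \<tau> d < 1 / 2 \<and> 1 \<le> ln (real d) \<and> 8 * (B' + 5) / c \<le> ln (real d)
          \<and> 2 * (ln M + C) \<le> ln (real d) \<and> 2 * (ln M + (4 * B' + 14) / c) \<le> ln (ln (real d))"
    using order_tendstoD(2)[OF \<open>\<tau> \<longlonglongrightarrow> 0\<close>, of "1 / 2"] ln_d ln_ln_d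
    unfolding filterlim_at_top by (intro eventually_conj eventually_ge_at_top) auto
  thus ?thesis
  proof (rule eventually_mono, intro allI impI)
    fix d m :: nat
    assume d: "d \<ge> 3 \<and> \<tau> d < 1 / 2 \<and> 1 \<le> ln (real d) \<and> 8 * (B' + 5) / c \<le> ln (real d)
          \<and> 2 * (ln M + C) \<le> ln (real d) \<and> 2 * (ln M + (4 * B' + 14) / c) \<le> ln (ln (real d))"
      and "m \<ge> 2"
    have "8 * (B' + 5) \<le> c * ln (real d)" using d \<open>c > 0\<close> by (simp add: field_simps)
    moreover have "t d * \<sigma> d \<le> B'" using assms(4) d by (force simp: B'_def)
    ultimately show "F_summand M (t d) (\<sigma> d) (\<tau> d) d m \<le> inverse (real d ^ 2) * inverse (real m ^ 2)"
      using assms(1-3) d \<open>m \<ge> 2\<close> ln_totient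
      by (intro F_summand_le_inverse_squares[where c = c and C = C]) (simp_all add: B'_def)
  qed
qed

lemma summable_on_Sigma_if_eventually_dominated:
  fixes f :: "nat \<times> 'a \<Rightarrow> real" and g :: "nat \<Rightarrow> real" and h :: "'a \<Rightarrow> real"
  assumes nonneg: "\<And>d m. d \<in> A \<Longrightarrow> m \<in> B d \<Longrightarrow> f (d, m) \<ge> 0"
    and rows: "\<And>d. d \<in> A \<Longrightarrow> (\<lambda>m. f (d, m)) summable_on B d"
    and dominated: "\<forall>\<^sub>F d in sequentially. d \<in> A \<longrightarrow> (\<forall>m\<in>B d. f (d, m) \<le> g d * h m)"
    and "summable g" "\<And>d. g d \<ge> 0" "h summable_on UNIV" "\<And>m. h m \<ge> 0"
  shows "f summable_on Sigma A B"
proof -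
  define r where "r d = (if d \<in> A then infsum (\<lambda>m. f (d, m)) (B d) else 0)" for d
  have "r d \<le> g d * infsum h UNIV" if "d \<in> A" "\<forall>m\<in>B d. f (d, m) \<le> g d * h m" for d
  proof -
    have "h summable_on B d" using \<open>h summable_on UNIV\<close> by (rule summable_on_subset_banach) simp
    hence "r d \<le> infsum (\<lambda>m. g d * h m) (B d)"
      using that rows by (auto simp: r_def intro!: infsum_mono summable_on_cmult_right)
    also have "\<dots> = g d * infsum h (B d)" by (rule infsum_cmult_right) (rule \<open>h summable_on B d\<close>)
    also have "\<dots> \<le> g d * infsum h UNIV"
      using \<open>h summable_on B d\<close> assms(5-7) by (intro mult_left_mono infsum_mono2) auto
    finally show ?thesis .
  qed
  moreover have "r d \<ge> 0" for d using nonneg by (auto simp: r_def intro: infsum_nonneg)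
  moreover have "g d * infsum h UNIV \<ge> 0" for d using assms(5,7) by (simp add: infsum_nonneg)
  ultimately have "\<forall>\<^sub>F d in sequentially. norm (r d) \<le> g d * infsum h UNIV"
    using dominated by (auto elim!: eventually_mono simp: r_def)
  hence "summable r" using \<open>summable g\<close> by (rule summable_comparison_test_ev[OF _ summable_mult2])
  hence "r summable_on A"
    using \<open>\<And>d. r d \<ge> 0\<close> summable_on_UNIV_nonneg_real_iff summable_on_subset_banach by blast
  hence "(\<lambda>d. infsum (\<lambda>m. f (d, m)) (B d)) summable_on A" by (simp add: r_def cong: summable_on_cong)
  thus ?thesis using rows nonneg by (intro summable_on_SigmaI) (auto simp: has_sum_infsum)
qed

theorem proposition11p7:
  fixes M :: real and t \<sigma> \<tau> :: "nat \<Rightarrow> real"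
  assumes "M > 0"
    and "\<exists>c>0. \<forall>d\<ge>3. t d \<ge> c * ln (real d)"
    and "bounded {t d * \<sigma> d | d. d \<ge> 3}"
    and "(\<tau> \<longlongrightarrow> 0) sequentially"
  shows "(\<lambda>(d, m). real (F d m) *
            ((M * real d * real m powr \<sigma> d * ln (real m) powr \<tau> d)
              / (real (totient m) * ln (real m))) powr t d)
         summable_on {(d, m). d \<ge> 3 \<and> t d * (1 - \<sigma> d) > 1 \<and> m \<ge> 2}"
proof -
  obtain c where "c > 0" and t_ge: "\<And>d. d \<ge> 3 \<Longrightarrow> c * ln (real d) \<le> t d" using assms(2) by auto
  obtain B where t\<sigma>_le: "\<And>d. d \<ge> 3 \<Longrightarrow> t d * \<sigma> d \<le> B"
    using assms(3) unfolding bounded_iff by (force dest: abs_le_D1)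
  define A where "A = {d. d \<ge> 3 \<and> t d * (1 - \<sigma> d) > 1}"
  have t_pos: "t d > 0" if "d \<in> A" for d
  proof -
    have "0 < c * ln (real d)" using \<open>c > 0\<close> that by (simp add: A_def)
    thus ?thesis using t_ge[of d] that by (simp add: A_def)
  qed
  have inverse_squares: "summable (\<lambda>n::nat. inverse (real n ^ 2))"
    by (rule inverse_power_summable) simp
  hence "(\<lambda>n::nat. inverse (real n ^ 2)) summable_on UNIV"
    by (subst summable_on_UNIV_nonneg_real_iff) auto
  with t_pos inverse_squares have "(\<lambda>(d, m). F_summand M (t d) (\<sigma> d) (\<tau> d) d m) summable_on Sigma A (\<lambda>_. {2..})"
    using eventually_F_summand_le_inverse_squares[OF assms(1) \<open>c > 0\<close> t_ge t\<sigma>_le assms(4)]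
      summable_on_F_summand_row[OF assms(1)]
    by (intro summable_on_Sigma_if_eventually_dominated[where g = "\<lambda>d. inverse (real d ^ 2)"
          and h = "\<lambda>m. inverse (real m ^ 2)"])
       (auto simp: F_summand_nonneg A_def elim!: eventually_mono)
  moreover have "Sigma A (\<lambda>_. {2::nat..}) = {(d, m). d \<ge> 3 \<and> t d * (1 - \<sigma> d) > 1 \<and> m \<ge> 2}"
    by (auto simp: A_def)
  ultimately show ?thesis by (simp add: F_summand_def case_prod_beta)
qed

end
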